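(* Let $\mathfrak F=\langle U,B\rangle$ be a 3-frame and $\mathrm{Cm}^{ps}(\mathfrak F)=\langle 2^U,\langle B\rangle,[\![B]\!]\rangle$ its full complex algebra. If $\mathfrak F$ is a betweenness frame (resp. weak betweenness frame, strong betweenness frame), then $\mathrm{Cm}^{ps}(\mathfrak F)$ is a betweenness algebra (resp. weak betweenness algebra, strong betweenness algebra).
   Context: A 3-frame is $\langle U,B\rangle$ with $U\neq\emptyset$, $B\subseteq U^3$. Axioms (for all $a,b,c\in U$): (BT0) $B(a,a,a)$; (BT1) $B(a,b,c)\Rightarrow B(c,b,a)$; (BT2) $B(a,b,c)\Rightarrow B(a,a,b)$; (BT3) $B(a,b,c)\wedge B(a,c,b)\Rightarrow b=c$; (BTW) $B(a,b,a)\Rightarrow a=b$; (BT2s) $B(a,a,b)$. A betweenness frame satisfies (BT0)–(BT3); a weak betweenness frame satisfies (BT0),(BT1),(BT2),(BTW); a strong betweenness frame satisfies (BT0),(BT1),(BT2s),(BT3). Operators on $2^U$: $\langle B\rangle(X,Y)=\{u\mid\exists x\in X\,\exists y\in Y\,B(x,u,y)\}$, $[\![B]\!](X,Y)=\{u\mid\forall x\in X\,\forall y\in Y\,B(x,u,y)\}$. A PS-algebra is $\langle A,f,g\rangle$, $A$ a Boolean algebra with at least two elements, $f,g\colon A^2\to A$, $f$ normal ($f(x,y)=0$ if $x=0$ or $y=0$) and additive in each argument, $g$ co-normal ($g(x,y)=1$ if $x=0$ or $y=0$) and co-additive in each argument ($g(x+x',y)=g(x,y)g(x',y)$, $g(x,y+y')=g(x,y)g(x,y')$).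 Algebraic axioms (for all $x,y,z$): (ABT0) $x\leq f(x,x)$; (ABT1$_f$) $f(x,y)\leq f(y,x)$; (ABT1$_g$) $g(x,y)\leq g(y,x)$; (ABT2) $y\cdot f(x,z)\leq f(x\cdot f(x,y),z)$; (ABT3) $f(x,g(x,-y)\cdot y)\leq y$; (wMIA) $x\neq0,y\neq0\Rightarrow g(x,y)\leq f(x,y)$; (ABTW) $a\neq0\Rightarrow g(a,a)\leq a$; (ABT2$^{\mathrm s}$) $b\neq0\Rightarrow a\leq f(a,b)$. A betweenness algebra satisfies (ABT0),(ABT1$_f$),(ABT1$_g$),(ABT2),(ABT3),(wMIA); a weak betweenness algebra satisfies (ABT0),(ABT1$_f$),(ABT1$_g$),(ABT2),(ABTW); a strong betweenness algebra satisfies (ABT1$_f$),(ABT1$_g$),(ABT3),(wMIA),(ABT2$^{\mathrm s}$). *)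

theory Defs
  imports Main
begin

text \<open>3-frames: the universe U is the (nonempty) type 'a, B a ternary relation on it.\<close>

type_synonym 'a tern = "'a \<Rightarrow> 'a \<Rightarrow> 'a \<Rightarrow> bool"

definition BT0 :: "'a tern \<Rightarrow> bool" where "BT0 B \<longleftrightarrow> (\<forall>a. B a a a)"
definition BT1 :: "'a tern \<Rightarrow> bool" where "BT1 B \<longleftrightarrow> (\<forall>a b c. B a b c \<longrightarrow> B c b a)"
definition BT2 :: "'a tern \<Rightarrow> bool" where "BT2 B \<longleftrightarrow> (\<forall>a b c. B a b c \<longrightarrow> B a a b)"
definition BT3 :: "'a tern \<Rightarrow> bool" where
  "BT3 B \<longleftrightarrow> (\<forall>a b c. B a b c \<and> B a c b \<longrightarrow> b = c)"
definition BTW :: "'a tern \<Rightarrow> bool" where "BTW B \<longleftrightarrow> (\<forall>a b. B a b a \<longrightarrow> a = b)"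
definition BT2s :: "'a tern \<Rightarrow> bool" where "BT2s B \<longleftrightarrow> (\<forall>a b. B a a b)"

definition betweenness_frame :: "'a tern \<Rightarrow> bool" where
  "betweenness_frame B \<longleftrightarrow> BT0 B \<and> BT1 B \<and> BT2 B \<and> BT3 B"
definition weak_betweenness_frame :: "'a tern \<Rightarrow> bool" where
  "weak_betweenness_frame B \<longleftrightarrow> BT0 B \<and> BT1 B \<and> BT2 B \<and> BTW B"
definition strong_betweenness_frame :: "'a tern \<Rightarrow> bool" where
  "strong_betweenness_frame B \<longleftrightarrow> BT0 B \<and> BT1 B \<and> BT2s B \<and> BT3 B"

definition diaB :: "'a tern \<Rightarrow> 'a set \<Rightarrow> 'a set \<Rightarrow> 'a set" where
  "diaB B X Y = {u. \<exists>x\<in>X. \<exists>y\<in>Y. B x u y}"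
definition boxB :: "'a tern \<Rightarrow> 'a set \<Rightarrow> 'a set \<Rightarrow> 'a set" where
  "boxB B X Y = {u. \<forall>x\<in>X. \<forall>y\<in>Y. B x u y}"

text \<open>PS-algebras over a Boolean algebra type 'b (carrier = all of 'b).\<close>
definition PS_algebra :: "('b::boolean_algebra \<Rightarrow> 'b \<Rightarrow> 'b) \<Rightarrow> ('b \<Rightarrow> 'b \<Rightarrow> 'b) \<Rightarrow> bool" where
  "PS_algebra f g \<longleftrightarrow>
     (\<exists>x y :: 'b. x \<noteq> y) \<and>
     (\<forall>x. f bot x = bot \<and> f x bot = bot) \<and>
     (\<forall>x x' y. f (sup x x') y = sup (f x y) (f x' y)) \<and>
     (\<forall>x y y'. f x (sup y y') = sup (f x y) (f x y')) \<and>
     (\<forall>x. g bot x = top \<and> g x bot = top) \<and>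
     (\<forall>x x' y. g (sup x x') y = inf (g x y) (g x' y)) \<and>
     (\<forall>x y y'. g x (sup y y') = inf (g x y) (g x y'))"

definition ABT0 :: "('b::boolean_algebra \<Rightarrow> 'b \<Rightarrow> 'b) \<Rightarrow> bool" where
  "ABT0 f \<longleftrightarrow> (\<forall>x. x \<le> f x x)"
definition ABT1f :: "('b::boolean_algebra \<Rightarrow> 'b \<Rightarrow> 'b) \<Rightarrow> bool" where
  "ABT1f f \<longleftrightarrow> (\<forall>x y. f x y \<le> f y x)"
definition ABT1g :: "('b::boolean_algebra \<Rightarrow> 'b \<Rightarrow> 'b) \<Rightarrow> bool" where
  "ABT1g g \<longleftrightarrow> (\<forall>x y. g x y \<le> g y x)"
definition ABT2 :: "('b::boolean_algebra \<Rightarrow> 'b \<Rightarrow> 'b) \<Rightarrow> bool" where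
  "ABT2 f \<longleftrightarrow> (\<forall>x y z. inf y (f x z) \<le> f (inf x (f x y)) z)"
definition ABT3 :: "('b::boolean_algebra \<Rightarrow> 'b \<Rightarrow> 'b) \<Rightarrow> ('b \<Rightarrow> 'b \<Rightarrow> 'b) \<Rightarrow> bool" where
  "ABT3 f g \<longleftrightarrow> (\<forall>x y. f x (inf (g x (- y)) y) \<le> y)"
definition wMIA :: "('b::boolean_algebra \<Rightarrow> 'b \<Rightarrow> 'b) \<Rightarrow> ('b \<Rightarrow> 'b \<Rightarrow> 'b) \<Rightarrow> bool" where
  "wMIA f g \<longleftrightarrow> (\<forall>x y. x \<noteq> bot \<and> y \<noteq> bot \<longrightarrow> g x y \<le> f x y)"
definition ABTW :: "('b::boolean_algebra \<Rightarrow> 'b \<Rightarrow> 'b) \<Rightarrow> bool" where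
  "ABTW g \<longleftrightarrow> (\<forall>a. a \<noteq> bot \<longrightarrow> g a a \<le> a)"
definition ABT2s :: "('b::boolean_algebra \<Rightarrow> 'b \<Rightarrow> 'b) \<Rightarrow> bool" where
  "ABT2s f \<longleftrightarrow> (\<forall>a b. b \<noteq> bot \<longrightarrow> a \<le> f a b)"

definition betweenness_algebra where
  "betweenness_algebra f g \<longleftrightarrow> PS_algebra f g \<and> ABT0 f \<and> ABT1f f \<and> ABT1g g \<and>
     ABT2 f \<and> ABT3 f g \<and> wMIA f g"
definition weak_betweenness_algebra where
  "weak_betweenness_algebra f g \<longleftrightarrow> PS_algebra f g \<and> ABT0 f \<and> ABT1f f \<and> ABT1g g \<and>
     ABT2 f \<and> ABTW g"
definition strong_betweenness_algebra where
  "strong_betweenness_algebra f g \<longleftrightarrow> PS_algebra f g \<and> ABT1f f \<and> ABT1g g \<and>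
     ABT3 f g \<and> wMIA f g \<and> ABT2s f"

end

theory Submission
  imports Defs
begin

lemma complex_algebra_PS_algebra: "PS_algebra (diaB B) (boxB B)"
  unfolding PS_algebra_def diaB_def boxB_def
proof (intro conjI)
  show "\<exists>x y :: 'a set. x \<noteq> y" by (intro exI[of _ "{}"] exI[of _ UNIV]) simp
qed blast+

lemma ABT0_diaB: "BT0 B \<Longrightarrow> ABT0 (diaB B)"
  unfolding BT0_def ABT0_def diaB_def by auto

lemma ABT1f_diaB: "BT1 B \<Longrightarrow> ABT1f (diaB B)"
  unfolding BT1_def ABT1f_def diaB_def by blast

lemma ABT1g_boxB: "BT1 B \<Longrightarrow> ABT1g (boxB B)"
  unfolding BT1_def ABT1g_def boxB_def by blast

lemma ABT2_diaB:
  assumes "BT2 B"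
  shows "ABT2 (diaB B)"
  unfolding ABT2_def
proof (intro allI subsetI)
  fix X Y Z u
  assume "u \<in> Y \<inter> diaB B X Z"
  then obtain x z where "u \<in> Y" "x \<in> X" "z \<in> Z" "B x u z"
    unfolding diaB_def by blast
  have "B x x u" using \<open>B x u z\<close> assms unfolding BT2_def by blast
  then have "x \<in> X \<inter> diaB B X Y"
    using \<open>x \<in> X\<close> \<open>u \<in> Y\<close> unfolding diaB_def by blast
  then show "u \<in> diaB B (X \<inter> diaB B X Y) Z"
    using \<open>z \<in> Z\<close> \<open>B x u z\<close> unfolding diaB_def by blast
qed

lemma ABT3_diaB_boxB:
  assumes "BT3 B"
  shows "ABT3 (diaB B) (boxB B)"
  unfolding ABT3_def
proof (intro allI subsetI)
  fix X Y u
  assume "u \<in> diaB B X (boxB B X (- Y) \<inter> Y)"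
  then obtain x y where "x \<in> X" "y \<in> Y" "y \<in> boxB B X (- Y)" "B x u y"
    unfolding diaB_def by blast
  show "u \<in> Y"
  proof (rule ccontr)
    assume "u \<notin> Y"
    then have "B x y u"
      using \<open>y \<in> boxB B X (- Y)\<close> \<open>x \<in> X\<close> unfolding boxB_def by blast
    then have "u = y" using \<open>B x u y\<close> assms unfolding BT3_def by blast
    with \<open>y \<in> Y\<close> \<open>u \<notin> Y\<close> show False by simp
  qed
qed

lemma wMIA_diaB_boxB: "wMIA (diaB B) (boxB B)"
  unfolding wMIA_def diaB_def boxB_def by blast

lemma ABTW_boxB: "BTW B \<Longrightarrow> ABTW (boxB B)"
  unfolding BTW_def ABTW_def boxB_def by blast

lemma ABT2s_diaB: "BT2s B \<Longrightarrow> ABT2s (diaB B)"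
  unfolding BT2s_def ABT2s_def diaB_def by blast

theorem theorem28:
  fixes B :: "'a \<Rightarrow> 'a \<Rightarrow> 'a \<Rightarrow> bool"
  shows "(betweenness_frame B \<longrightarrow> betweenness_algebra (diaB B) (boxB B)) \<and>
         (weak_betweenness_frame B \<longrightarrow> weak_betweenness_algebra (diaB B) (boxB B)) \<and>
         (strong_betweenness_frame B \<longrightarrow> strong_betweenness_algebra (diaB B) (boxB B))"
  unfolding betweenness_frame_def weak_betweenness_frame_def strong_betweenness_frame_def
    betweenness_algebra_def weak_betweenness_algebra_def strong_betweenness_algebra_def
  by (simp add: complex_algebra_PS_algebra ABT0_diaB ABT1f_diaB ABT1g_boxB ABT2_diaB
      ABT3_diaB_boxB wMIA_diaB_boxB ABTW_boxB ABT2s_diaB)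

end
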